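(* Consider $\tau=t$ on Minkowski space $\mathbb{M}^{n+1}=(\mathbb{R}\times\mathbb{R}^n,-dt^2+(dx^1)^2+\dots+(dx^n)^2)$, and write $p=(t_p,p_S)$ with $p_S\in\mathbb{R}^n$. Then: (1) $\hat{d}_t$ is a definite, translation invariant metric on $\mathbb{M}^{n+1}$, with $\hat{d}_t(p,q)=|t(q)-t(p)|$ if $q\in J^+(p)\cup J^-(p)$, and $\hat{d}_t(p,q)=\|q_S-p_S\|$ if $q\notin J^+(p)\cup J^-(p)$, where $\|\cdot\|$ is the Euclidean norm; (2) for all $p,q$: $p\le q \iff \hat{d}_t(p,q)=t(q)-t(p)$; (3) the $\hat{d}_t$-spheres are coordinate cylinders; for example, the null distance sphere of radius $r$ about the origin is $\{(t,x):\max\{|t|,\|x\|\}=r\}$.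
   Context: Minkowski space is time-oriented by $\partial_t$. Piecewise smooth curves are future (past) causal if all tangents, including one-sided ones, are future (past) pointing causal vectors; constant curves count as causal. $J^+(p)$ ($J^-(p)$) is the set of points reachable from $p$ by a future (past) causal curve, and $p\le q$ means $q\in J^+(p)$. For a function $\tau$ strictly increasing along future causal curves, a piecewise causal curve $\beta:[a,b]\to M$ has a partition $a=s_0<\dots<s_k=b$ with each restriction a smooth future or past causal curve; its null length is $\hat{L}_\tau(\beta)=\sum_i|\tau(\beta(s_i))-\tau(\beta(s_{i-1}))|$, and $\hat{d}_\tau(p,q)=\inf\{\hat{L}_\tau(\beta):\beta$ piecewise causal from $p$ to $q\}$. *)

theory Defs
  imports "HOL-Analysis.Analysis"
begin

text \<open>Points of Minkowski space M^(n+1) = R x R^n, written p = (t_p, p_S).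
  The spatial dimension n is the cardinality of the finite index type 'n.\<close>
type_synonym 'n mpoint = "real \<times> (real ^ 'n)"

definition mink_g :: "'n::finite mpoint \<Rightarrow> 'n mpoint \<Rightarrow> real" where
  "mink_g v w = - (fst v * fst w) + snd v \<bullet> snd w"

text \<open>Causal vectors: nonzero with g(v,v) <= 0; time orientation by d/dt:
  future pointing iff g(v, d/dt) < 0, i.e. fst v > 0.\<close>
definition causal_vec :: "'n::finite mpoint \<Rightarrow> bool" where
  "causal_vec v \<longleftrightarrow> v \<noteq> 0 \<and> mink_g v v \<le> 0"

definition future_causal_vec :: "'n::finite mpoint \<Rightarrow> bool" where
  "future_causal_vec v \<longleftrightarrow> causal_vec v \<and> mink_g v (1, 0) < 0"

definition past_causal_vec :: "'n::finite mpoint \<Rightarrow> bool" where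
  "past_causal_vec v \<longleftrightarrow> causal_vec v \<and> mink_g v (1, 0) > 0"

definition smooth_on_ivl :: "real \<Rightarrow> real \<Rightarrow> (real \<Rightarrow> 'a::real_normed_vector) \<Rightarrow> bool" where
  "smooth_on_ivl a b \<beta> \<longleftrightarrow>
     (\<exists>D. D 0 = \<beta> \<and>
        (\<forall>k. \<forall>x\<in>{a..b}. (D k has_vector_derivative D (Suc k) x) (at x within {a..b})))"

definition smooth_curve_with :: "('n::finite mpoint \<Rightarrow> bool) \<Rightarrow> real \<Rightarrow> real \<Rightarrow> (real \<Rightarrow> 'n mpoint) \<Rightarrow> bool" where
  "smooth_curve_with P a b \<beta> \<longleftrightarrow> a < b \<and> smooth_on_ivl a b \<beta> \<and>
     ((\<forall>x\<in>{a..b}. \<beta> x = \<beta> a) \<or>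
      (\<forall>x\<in>{a..b}. \<forall>v. (\<beta> has_vector_derivative v) (at x within {a..b}) \<longrightarrow> P v))"

definition is_partition :: "real \<Rightarrow> real \<Rightarrow> (nat \<Rightarrow> real) \<Rightarrow> nat \<Rightarrow> bool" where
  "is_partition a b s k \<longleftrightarrow> 0 < k \<and> s 0 = a \<and> s k = b \<and> (\<forall>i<k. s i < s (Suc i))"

definition future_causal_curve :: "real \<Rightarrow> real \<Rightarrow> (real \<Rightarrow> 'n::finite mpoint) \<Rightarrow> (nat \<Rightarrow> real) \<Rightarrow> nat \<Rightarrow> bool" where
  "future_causal_curve a b \<beta> s k \<longleftrightarrow> is_partition a b s k \<and>
     (\<forall>i<k. smooth_curve_with future_causal_vec (s i) (s (Suc i)) \<beta>)"

definition past_causal_curve :: "real \<Rightarrow> real \<Rightarrow> (real \<Rightarrow> 'n::finite mpoint) \<Rightarrow> (nat \<Rightarrow> real) \<Rightarrow> nat \<Rightarrow> bool" where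
  "past_causal_curve a b \<beta> s k \<longleftrightarrow> is_partition a b s k \<and>
     (\<forall>i<k. smooth_curve_with past_causal_vec (s i) (s (Suc i)) \<beta>)"

definition piecewise_causal :: "real \<Rightarrow> real \<Rightarrow> (real \<Rightarrow> 'n::finite mpoint) \<Rightarrow> (nat \<Rightarrow> real) \<Rightarrow> nat \<Rightarrow> bool" where
  "piecewise_causal a b \<beta> s k \<longleftrightarrow> is_partition a b s k \<and>
     (\<forall>i<k. smooth_curve_with future_causal_vec (s i) (s (Suc i)) \<beta>
           \<or> smooth_curve_with past_causal_vec (s i) (s (Suc i)) \<beta>)"

definition J_plus :: "'n::finite mpoint \<Rightarrow> 'n mpoint set" where
  "J_plus p = {q. \<exists>a b \<beta> s k. future_causal_curve a b \<beta> s k \<and> \<beta> a = p \<and> \<beta> b = q}"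

definition J_minus :: "'n::finite mpoint \<Rightarrow> 'n mpoint set" where
  "J_minus p = {q. \<exists>a b \<beta> s k. past_causal_curve a b \<beta> s k \<and> \<beta> a = p \<and> \<beta> b = q}"

definition causal_le :: "'n::finite mpoint \<Rightarrow> 'n mpoint \<Rightarrow> bool" where
  "causal_le p q \<longleftrightarrow> q \<in> J_plus p"

definition null_length :: "('n::finite mpoint \<Rightarrow> real) \<Rightarrow> (real \<Rightarrow> 'n mpoint) \<Rightarrow> (nat \<Rightarrow> real) \<Rightarrow> nat \<Rightarrow> real" where
  "null_length \<tau> \<beta> s k = (\<Sum>i<k. \<bar>\<tau> (\<beta> (s (Suc i))) - \<tau> (\<beta> (s i))\<bar>)"

definition null_dist :: "('n::finite mpoint \<Rightarrow> real) \<Rightarrow> 'n mpoint \<Rightarrow> 'n mpoint \<Rightarrow> real" where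
  "null_dist \<tau> p q = Inf {null_length \<tau> \<beta> s k | a b \<beta> s k.
       piecewise_causal a b \<beta> s k \<and> \<beta> a = p \<and> \<beta> b = q}"

end

theory Submission
  imports Defs
begin

text \<open>Along a smooth causal piece the spatial displacement is bounded by the time displacement,
  \<open>\<parallel>\<Delta>x\<parallel> \<le> |\<Delta>t|\<close>. Telescoping over the pieces bounds the null length of every piecewise
  causal curve from below by \<open>max |\<Delta>t| \<parallel>\<Delta>x\<parallel>\<close>. The bound is attained by the straight segment
  when \<open>q\<close> is causally related to \<open>p\<close>, and otherwise by a future null segment followed by a past
  null segment. Hence \<open>d\<^sub>t(p,q) = max |\<Delta>t| \<parallel>\<Delta>x\<parallel>\<close>, from which all claims follow.\<close>

lemma nondecreasing_if_has_vector_derivative_nonneg: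
  fixes g :: "real \<Rightarrow> real"
  assumes "a \<le> b"
    and deriv: "\<And>x. x \<in> {a..b} \<Longrightarrow> (g has_vector_derivative g' x) (at x within {a..b})"
    and nonneg: "\<And>x. x \<in> {a..b} \<Longrightarrow> 0 \<le> g' x"
  shows "g a \<le> g b"
proof (rule DERIV_nonneg_imp_increasing_open[OF \<open>a \<le> b\<close>])
  fix x assume x: "a < x" "x < b"
  then have "(g has_vector_derivative g' x) (at x)"
    using deriv[of x] at_within_Icc_at[of a x b] by simp
  then show "\<exists>y. DERIV g x :> y \<and> 0 \<le> y"
    using nonneg[of x] x by (auto simp: has_real_derivative_iff_has_vector_derivative)
next
  show "continuous_on {a..b} g"
    by (rule continuous_on_vector_derivative) (use deriv in auto)
qed

lemma displacement_le_if_derivative_in_cone: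
  fixes \<beta> :: "real \<Rightarrow> real \<times> 'a::real_inner"
  assumes "a \<le> b"
    and deriv: "\<And>x. x \<in> {a..b} \<Longrightarrow> (\<beta> has_vector_derivative V x) (at x within {a..b})"
    and cone: "\<And>x. x \<in> {a..b} \<Longrightarrow> norm (snd (V x)) \<le> \<sigma> * fst (V x)"
  shows "norm (snd (\<beta> b) - snd (\<beta> a)) \<le> \<sigma> * (fst (\<beta> b) - fst (\<beta> a))"
proof -
  define u where "u = sgn (snd (\<beta> b) - snd (\<beta> a))"
  have pairing: "(\<sigma>, - u) \<bullet> z = \<sigma> * fst z - u \<bullet> snd z" for z :: "real \<times> 'a"
    by (simp add: inner_prod_def)
  \<comment> \<open>Pairing with the covector \<open>(\<sigma>, -u)\<close>, \<open>u\<close> the unit vector along the spatial displacement,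
     is nondecreasing along \<open>\<beta>\<close> by Cauchy-Schwarz.\<close>
  have "(\<sigma>, - u) \<bullet> \<beta> a \<le> (\<sigma>, - u) \<bullet> \<beta> b"
  proof (rule nondecreasing_if_has_vector_derivative_nonneg[OF \<open>a \<le> b\<close>])
    fix x assume x: "x \<in> {a..b}"
    show "((\<lambda>t. (\<sigma>, - u) \<bullet> \<beta> t) has_vector_derivative (\<sigma>, - u) \<bullet> V x) (at x within {a..b})"
      by (rule bounded_linear.has_vector_derivative[OF bounded_linear_inner_right deriv[OF x]])
    have "u \<bullet> snd (V x) \<le> norm u * norm (snd (V x))" by (rule norm_cauchy_schwarz)
    also have "\<dots> \<le> norm (snd (V x))" by (simp add: u_def norm_sgn mult_left_le_one_le)
    finally show "0 \<le> (\<sigma>, - u) \<bullet> V x" using cone[OF x] pairing[of "V x"] by simp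
  qed
  moreover have "u \<bullet> (snd (\<beta> b) - snd (\<beta> a)) = norm (snd (\<beta> b) - snd (\<beta> a))"
    by (cases "snd (\<beta> b) = snd (\<beta> a)")
      (simp_all add: u_def sgn_div_norm dot_square_norm power2_eq_square)
  ultimately show ?thesis
    using pairing[of "\<beta> a"] pairing[of "\<beta> b"] by (simp add: inner_diff_right algebra_simps)
qed

lemma mink_g_self: "mink_g v v = (norm (snd v))\<^sup>2 - (fst v)\<^sup>2"
  unfolding mink_g_def dot_square_norm by (simp add: power2_eq_square)

lemma future_causal_vec_iff: "future_causal_vec v \<longleftrightarrow> norm (snd v) \<le> fst v \<and> 0 < fst v"
proof -
  have "norm (snd v) \<le> fst v \<longleftrightarrow> (norm (snd v))\<^sup>2 \<le> (fst v)\<^sup>2" if "0 < fst v"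
    using that by (simp add: abs_le_square_iff)
  then show ?thesis
    by (auto simp: future_causal_vec_def causal_vec_def mink_g_self mink_g_def)
qed

lemma past_causal_vec_iff_future_uminus: "past_causal_vec v \<longleftrightarrow> future_causal_vec (- v)"
  by (simp add: past_causal_vec_def future_causal_vec_def causal_vec_def mink_g_def)

lemma past_causal_vec_iff: "past_causal_vec v \<longleftrightarrow> norm (snd v) \<le> - fst v \<and> fst v < 0"
  by (auto simp: past_causal_vec_iff_future_uminus future_causal_vec_iff)

lemma smooth_curve_with_displacement_le:
  fixes \<beta> :: "real \<Rightarrow> 'n::finite mpoint"
  assumes curve: "smooth_curve_with P a b \<beta>"
    and cone: "\<And>v. P v \<Longrightarrow> norm (snd v) \<le> \<sigma> * fst v"
  shows "norm (snd (\<beta> b) - snd (\<beta> a)) \<le> \<sigma> * (fst (\<beta> b) - fst (\<beta> a))"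
proof -
  from curve have "a < b" and "smooth_on_ivl a b \<beta>"
    and tangents: "(\<forall>x\<in>{a..b}. \<beta> x = \<beta> a) \<or>
      (\<forall>x\<in>{a..b}. \<forall>v. (\<beta> has_vector_derivative v) (at x within {a..b}) \<longrightarrow> P v)"
    by (auto simp: smooth_curve_with_def)
  then obtain D where "D 0 = \<beta>"
    and D: "\<forall>k. \<forall>x\<in>{a..b}. (D k has_vector_derivative D (Suc k) x) (at x within {a..b})"
    unfolding smooth_on_ivl_def by blast
  have deriv: "(\<beta> has_vector_derivative D 1 x) (at x within {a..b})" if "x \<in> {a..b}" for x
    using bspec[OF spec[OF D, of 0] that] \<open>D 0 = \<beta>\<close> by simp
  from tangents show ?thesis
  proof
    assume "\<forall>x\<in>{a..b}. \<beta> x = \<beta> a"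
    moreover have "b \<in> {a..b}" using \<open>a < b\<close> by simp
    ultimately have "\<beta> b = \<beta> a" by (rule bspec)
    then show ?thesis by simp
  next
    assume "\<forall>x\<in>{a..b}. \<forall>v. (\<beta> has_vector_derivative v) (at x within {a..b}) \<longrightarrow> P v"
    then have "norm (snd (D 1 x)) \<le> \<sigma> * fst (D 1 x)" if "x \<in> {a..b}" for x
      using cone deriv that by blast
    then show ?thesis
      using displacement_le_if_derivative_in_cone[of a b \<beta> "D 1" \<sigma>] \<open>a < b\<close> deriv by simp
  qed
qed

lemma future_smooth_curve_displacement_le:
  "smooth_curve_with future_causal_vec a b (\<beta> :: real \<Rightarrow> 'n::finite mpoint) \<Longrightarrow>
    norm (snd (\<beta> b) - snd (\<beta> a)) \<le> fst (\<beta> b) - fst (\<beta> a)"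
  using smooth_curve_with_displacement_le[of future_causal_vec a b \<beta> 1]
  by (simp add: future_causal_vec_iff)

lemma past_smooth_curve_displacement_le:
  "smooth_curve_with past_causal_vec a b (\<beta> :: real \<Rightarrow> 'n::finite mpoint) \<Longrightarrow>
    norm (snd (\<beta> b) - snd (\<beta> a)) \<le> fst (\<beta> a) - fst (\<beta> b)"
  using smooth_curve_with_displacement_le[of past_causal_vec a b \<beta> "-1"]
  by (simp add: past_causal_vec_iff)

lemma norm_telescope_le:
  fixes f :: "nat \<Rightarrow> 'a::real_normed_vector"
  assumes "\<And>i. i < k \<Longrightarrow> norm (f (Suc i) - f i) \<le> c i"
  shows "norm (f k - f 0) \<le> (\<Sum>i<k. c i)"
proof -
  have "norm (f k - f 0) = norm (\<Sum>i<k. f (Suc i) - f i)"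
    by (simp add: sum_lessThan_telescope)
  also have "\<dots> \<le> (\<Sum>i<k. norm (f (Suc i) - f i))" by (rule norm_sum)
  also have "\<dots> \<le> (\<Sum>i<k. c i)" by (rule sum_mono) (use assms in auto)
  finally show ?thesis .
qed

lemma future_causal_curve_displacement_le:
  fixes \<beta> :: "real \<Rightarrow> 'n::finite mpoint"
  assumes "future_causal_curve a b \<beta> s k"
  shows "norm (snd (\<beta> b) - snd (\<beta> a)) \<le> fst (\<beta> b) - fst (\<beta> a)"
proof -
  have "s 0 = a" "s k = b" using assms by (auto simp: future_causal_curve_def is_partition_def)
  moreover have "norm (snd (\<beta> (s k)) - snd (\<beta> (s 0))) \<le> (\<Sum>i<k. fst (\<beta> (s (Suc i))) - fst (\<beta> (s i)))"
    using assms future_smooth_curve_displacement_le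
    by (intro norm_telescope_le) (auto simp: future_causal_curve_def)
  ultimately show ?thesis using sum_lessThan_telescope[of "\<lambda>i. fst (\<beta> (s i))" k] by simp
qed

lemma past_causal_curve_displacement_le:
  fixes \<beta> :: "real \<Rightarrow> 'n::finite mpoint"
  assumes "past_causal_curve a b \<beta> s k"
  shows "norm (snd (\<beta> b) - snd (\<beta> a)) \<le> fst (\<beta> a) - fst (\<beta> b)"
proof -
  have "s 0 = a" "s k = b" using assms by (auto simp: past_causal_curve_def is_partition_def)
  moreover have "norm (snd (\<beta> (s k)) - snd (\<beta> (s 0))) \<le> (\<Sum>i<k. fst (\<beta> (s i)) - fst (\<beta> (s (Suc i))))"
    using assms past_smooth_curve_displacement_le
    by (intro norm_telescope_le) (auto simp: past_causal_curve_def)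
  ultimately show ?thesis using sum_lessThan_telescope'[of "\<lambda>i. fst (\<beta> (s i))" k] by simp
qed

lemma piecewise_causal_null_length_ge:
  fixes \<beta> :: "real \<Rightarrow> 'n::finite mpoint"
  assumes "piecewise_causal a b \<beta> s k"
  shows "max \<bar>fst (\<beta> b) - fst (\<beta> a)\<bar> (norm (snd (\<beta> b) - snd (\<beta> a))) \<le> null_length fst \<beta> s k"
proof -
  have ends: "s 0 = a" "s k = b" using assms by (auto simp: piecewise_causal_def is_partition_def)
  have "norm (snd (\<beta> (s (Suc i))) - snd (\<beta> (s i))) \<le> \<bar>fst (\<beta> (s (Suc i))) - fst (\<beta> (s i))\<bar>"
    if "i < k" for i
  proof -
    from assms that have "smooth_curve_with future_causal_vec (s i) (s (Suc i)) \<beta>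
        \<or> smooth_curve_with past_causal_vec (s i) (s (Suc i)) \<beta>"
      by (simp add: piecewise_causal_def)
    then show ?thesis
      using future_smooth_curve_displacement_le past_smooth_curve_displacement_le by fastforce
  qed
  then have "norm (snd (\<beta> b) - snd (\<beta> a)) \<le> null_length fst \<beta> s k"
    using norm_telescope_le[of k "\<lambda>i. snd (\<beta> (s i))"] ends by (simp add: null_length_def)
  moreover have "\<bar>fst (\<beta> b) - fst (\<beta> a)\<bar> \<le> null_length fst \<beta> s k"
    using norm_telescope_le[of k "\<lambda>i. fst (\<beta> (s i))"] ends by (simp add: null_length_def)
  ultimately show ?thesis by simp
qed

lemma smooth_curve_with_segment:
  fixes \<beta> :: "real \<Rightarrow> 'n::finite mpoint"
  assumes "a < b" and segment: "\<And>x. x \<in> {a..b} \<Longrightarrow> \<beta> x = c + (x - a) *\<^sub>R v"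
    and "v = 0 \<or> P v"
  shows "smooth_curve_with P a b \<beta>"
proof -
  have deriv: "(\<beta> has_vector_derivative v) (at x within {a..b})" if "x \<in> {a..b}" for x
  proof -
    have "((\<lambda>y. c + (y - a) *\<^sub>R v) has_vector_derivative v) (at x within {a..b})"
      by (auto intro!: derivative_eq_intros)
    then show ?thesis
      by (rule has_vector_derivative_transform_within[where d = 1]) (use that segment in auto)
  qed
  define D where "D k = (if k = 0 then \<beta> else if k = 1 then (\<lambda>_. v) else (\<lambda>_. 0))" for k :: nat
  have "(D k has_vector_derivative D (Suc k) x) (at x within {a..b})" if "x \<in> {a..b}" for k x
    using deriv that by (auto simp: D_def)
  then have "smooth_on_ivl a b \<beta>"
    unfolding smooth_on_ivl_def by (intro exI[of _ D]) (simp add: D_def)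
  moreover have "P w"
    if "v \<noteq> 0" "x \<in> {a..b}" "(\<beta> has_vector_derivative w) (at x within {a..b})" for x w
  proof -
    have "w = v"
      using vector_derivative_unique_within_closed_interval[of a b x \<beta> w v] \<open>a < b\<close> that deriv
      by (simp add: cbox_interval)
    then show ?thesis using \<open>v = 0 \<or> P v\<close> \<open>v \<noteq> 0\<close> by simp
  qed
  moreover have "\<beta> x = \<beta> a" if "v = 0" "x \<in> {a..b}" for x
    using that segment[of x] segment[of a] \<open>a < b\<close> by simp
  ultimately show ?thesis
    using \<open>a < b\<close> unfolding smooth_curve_with_def by blast
qed

lemma future_causal_vec_or_zero:
  assumes "norm (snd v) \<le> fst v"
  shows "v = 0 \<or> future_causal_vec v"
proof (cases "fst v = 0")
  case True
  with assms show ?thesis by (simp add: prod_eq_iff)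
next
  case False
  with assms norm_ge_zero[of "snd v"] have "0 < fst v" by linarith
  with assms show ?thesis by (simp add: future_causal_vec_iff)
qed

lemma past_causal_vec_or_zero:
  "norm (snd v) \<le> - fst v \<Longrightarrow> v = 0 \<or> past_causal_vec v"
  using future_causal_vec_or_zero[of "- v"] by (auto simp: past_causal_vec_iff_future_uminus)

lemma future_causal_segment:
  fixes p q :: "'n::finite mpoint"
  assumes "norm (snd q - snd p) \<le> fst q - fst p"
  shows "future_causal_curve 0 1 (\<lambda>x. p + x *\<^sub>R (q - p)) real 1"
proof -
  have "smooth_curve_with future_causal_vec 0 1 (\<lambda>x. p + x *\<^sub>R (q - p))"
    using future_causal_vec_or_zero[of "q - p"] assms
    by (intro smooth_curve_with_segment[where c = p and v = "q - p"]) auto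
  then show ?thesis by (simp add: future_causal_curve_def is_partition_def)
qed

lemma past_causal_segment:
  fixes p q :: "'n::finite mpoint"
  assumes "norm (snd q - snd p) \<le> fst p - fst q"
  shows "past_causal_curve 0 1 (\<lambda>x. p + x *\<^sub>R (q - p)) real 1"
proof -
  have "smooth_curve_with past_causal_vec 0 1 (\<lambda>x. p + x *\<^sub>R (q - p))"
    using past_causal_vec_or_zero[of "q - p"] assms
    by (intro smooth_curve_with_segment[where c = p and v = "q - p"]) auto
  then show ?thesis by (simp add: past_causal_curve_def is_partition_def)
qed

lemma future_past_broken_segment:
  fixes p m q :: "'n::finite mpoint"
  assumes future: "norm (snd m - snd p) \<le> fst m - fst p"
    and past: "norm (snd q - snd m) \<le> fst m - fst q"
  defines "\<beta> \<equiv> \<lambda>x. if x \<le> 1 then p + x *\<^sub>R (m - p) else m + (x - 1) *\<^sub>R (q - m)"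
  shows "piecewise_causal 0 2 \<beta> real 2" and "\<beta> 0 = p" and "\<beta> 2 = q"
    and "null_length fst \<beta> real 2 = (fst m - fst p) + (fst m - fst q)"
proof -
  have "smooth_curve_with future_causal_vec 0 1 \<beta>"
    using future_causal_vec_or_zero[of "m - p"] future
    by (intro smooth_curve_with_segment[where c = p and v = "m - p"]) (auto simp: \<beta>_def)
  moreover have "smooth_curve_with past_causal_vec 1 2 \<beta>"
    using past_causal_vec_or_zero[of "q - m"] past
    by (intro smooth_curve_with_segment[where c = m and v = "q - m"]) (auto simp: \<beta>_def)
  ultimately show "piecewise_causal 0 2 \<beta> real 2"
    by (auto simp: piecewise_causal_def is_partition_def less_2_cases_iff)
  show "\<beta> 0 = p" "\<beta> 2 = q" by (simp_all add: \<beta>_def)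
  moreover have "fst p \<le> fst m" "fst q \<le> fst m"
    using future past norm_ge_zero[of "snd m - snd p"] norm_ge_zero[of "snd q - snd m"] by linarith+
  ultimately show "null_length fst \<beta> real 2 = (fst m - fst p) + (fst m - fst q)"
    by (simp add: null_length_def numeral_2_eq_2 \<beta>_def)
qed

text \<open>A point outside the light cones is reached by a null segment to the future followed by a
  null segment to the past, meeting at time \<open>t\<^sub>p + (\<parallel>\<Delta>x\<parallel> + \<Delta>t)/2\<close>.\<close>
lemma null_length_broken_segment_eq_norm:
  fixes p q :: "'n::finite mpoint"
  assumes "\<bar>fst q - fst p\<bar> \<le> norm (snd q - snd p)"
  shows "\<exists>\<beta>. piecewise_causal 0 2 \<beta> real 2 \<and> \<beta> 0 = p \<and> \<beta> 2 = q
    \<and> null_length fst \<beta> real 2 = norm (snd q - snd p)"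
proof -
  define w where "w = snd q - snd p"
  define \<alpha> where "\<alpha> = (norm w + (fst q - fst p)) / 2"
  define m where "m = p + (\<alpha>, (\<alpha> / norm w) *\<^sub>R w)"
  have "0 \<le> \<alpha>" "\<alpha> \<le> norm w" using assms by (auto simp: \<alpha>_def w_def)
  have "norm (snd m - snd p) = \<alpha>"
    using \<open>0 \<le> \<alpha>\<close> \<open>\<alpha> \<le> norm w\<close> by (auto simp: m_def)
  moreover have "norm (snd q - snd m) = norm w - \<alpha>"
  proof (cases "w = 0")
    case False
    have "snd q - snd m = (1 - \<alpha> / norm w) *\<^sub>R w"
      by (simp add: m_def w_def algebra_simps)
    moreover have "\<alpha> / norm w \<le> 1"
      using \<open>\<alpha> \<le> norm w\<close> by (simp add: divide_le_eq)
    ultimately show ?thesis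
      using False by (simp add: field_simps)
  qed (use \<open>0 \<le> \<alpha>\<close> \<open>\<alpha> \<le> norm w\<close> in \<open>simp add: m_def w_def\<close>)
  moreover have "fst m - fst p = \<alpha>" "fst m - fst q = norm w - \<alpha>"
    by (simp_all add: m_def \<alpha>_def w_def field_simps)
  ultimately show ?thesis
    using future_past_broken_segment[of m p q] by (auto simp: w_def)
qed

lemma piecewise_causal_segment:
  fixes p q :: "'n::finite mpoint"
  assumes "norm (snd q - snd p) \<le> \<bar>fst q - fst p\<bar>"
  shows "piecewise_causal 0 1 (\<lambda>x. p + x *\<^sub>R (q - p)) real 1"
    and "null_length fst (\<lambda>x. p + x *\<^sub>R (q - p)) real 1 = \<bar>fst q - fst p\<bar>"
proof -
  have "future_causal_curve 0 1 (\<lambda>x. p + x *\<^sub>R (q - p)) real 1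
      \<or> past_causal_curve 0 1 (\<lambda>x. p + x *\<^sub>R (q - p)) real 1"
  proof (cases "fst p \<le> fst q")
    case True
    then show ?thesis by (intro disjI1 future_causal_segment) (use assms in arith)
  next
    case False
    then show ?thesis by (intro disjI2 past_causal_segment) (use assms in arith)
  qed
  then show "piecewise_causal 0 1 (\<lambda>x. p + x *\<^sub>R (q - p)) real 1"
    by (auto simp: future_causal_curve_def past_causal_curve_def piecewise_causal_def)
  show "null_length fst (\<lambda>x. p + x *\<^sub>R (q - p)) real 1 = \<bar>fst q - fst p\<bar>"
    by (simp add: null_length_def)
qed

lemma null_length_attains_max:
  fixes p q :: "'n::finite mpoint"
  shows "\<exists>a b \<beta> s k. max \<bar>fst q - fst p\<bar> (norm (snd q - snd p)) = null_length fst \<beta> s k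
    \<and> piecewise_causal a b \<beta> s k \<and> \<beta> a = p \<and> \<beta> b = q"
proof (cases "\<bar>fst q - fst p\<bar> \<le> norm (snd q - snd p)")
  case True
  then have "max \<bar>fst q - fst p\<bar> (norm (snd q - snd p)) = norm (snd q - snd p)"
    by (rule max_absorb2)
  with True show ?thesis
    using null_length_broken_segment_eq_norm by metis
next
  case False
  then have "max \<bar>fst q - fst p\<bar> (norm (snd q - snd p)) = \<bar>fst q - fst p\<bar>"
    and causal: "norm (snd q - snd p) \<le> \<bar>fst q - fst p\<bar>" by simp_all
  moreover have "(\<lambda>x. p + x *\<^sub>R (q - p)) 0 = p" "(\<lambda>x. p + x *\<^sub>R (q - p)) 1 = q" by simp_all
  ultimately show ?thesis
    using piecewise_causal_segment[OF causal] by metis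
qed

lemma null_dist_fst_eq:
  fixes p q :: "'n::finite mpoint"
  shows "null_dist fst p q = max \<bar>fst q - fst p\<bar> (norm (snd q - snd p))"
  unfolding null_dist_def
proof (rule cInf_eq_minimum)
  show "max \<bar>fst q - fst p\<bar> (norm (snd q - snd p)) \<in> {null_length fst \<beta> s k |a b \<beta> s k.
      piecewise_causal a b \<beta> s k \<and> \<beta> a = p \<and> \<beta> b = q}"
    using null_length_attains_max by blast
next
  fix l assume "l \<in> {null_length fst \<beta> s k |a b \<beta> s k.
      piecewise_causal a b \<beta> s k \<and> \<beta> a = p \<and> (\<beta> b :: 'n mpoint) = q}"
  then show "max \<bar>fst q - fst p\<bar> (norm (snd q - snd p)) \<le> l"
    using piecewise_causal_null_length_ge by blast
qed

lemma J_plus_iff: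
  fixes p q :: "'n::finite mpoint"
  shows "q \<in> J_plus p \<longleftrightarrow> norm (snd q - snd p) \<le> fst q - fst p"
proof
  assume "q \<in> J_plus p"
  then obtain a b \<beta> s k where "future_causal_curve a b \<beta> s k" "\<beta> a = p" "\<beta> b = q"
    unfolding J_plus_def by blast
  then show "norm (snd q - snd p) \<le> fst q - fst p"
    using future_causal_curve_displacement_le by blast
next
  assume "norm (snd q - snd p) \<le> fst q - fst p"
  then have "future_causal_curve 0 1 (\<lambda>x. p + x *\<^sub>R (q - p)) real 1"
    by (rule future_causal_segment)
  then show "q \<in> J_plus p"
    unfolding J_plus_def by force
qed

lemma J_minus_iff:
  fixes p q :: "'n::finite mpoint"
  shows "q \<in> J_minus p \<longleftrightarrow> norm (snd q - snd p) \<le> fst p - fst q"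
proof
  assume "q \<in> J_minus p"
  then obtain a b \<beta> s k where "past_causal_curve a b \<beta> s k" "\<beta> a = p" "\<beta> b = q"
    unfolding J_minus_def by blast
  then show "norm (snd q - snd p) \<le> fst p - fst q"
    using past_causal_curve_displacement_le by blast
next
  assume "norm (snd q - snd p) \<le> fst p - fst q"
  then have "past_causal_curve 0 1 (\<lambda>x. p + x *\<^sub>R (q - p)) real 1"
    by (rule past_causal_segment)
  then show "q \<in> J_minus p"
    unfolding J_minus_def by force
qed

theorem proposition3p3:
  fixes d :: "'n::finite mpoint \<Rightarrow> 'n mpoint \<Rightarrow> real"
  defines "d \<equiv> null_dist fst"
  shows "(\<forall>p q. d p q = 0 \<longleftrightarrow> p = q)
    \<and> (\<forall>p q. d p q = d q p)
    \<and> (\<forall>p q r. d p r \<le> d p q + d q r)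
    \<and> (\<forall>p q v. d (p + v) (q + v) = d p q)
    \<and> (\<forall>p q. q \<in> J_plus p \<union> J_minus p \<longrightarrow> d p q = \<bar>fst q - fst p\<bar>)
    \<and> (\<forall>p q. q \<notin> J_plus p \<union> J_minus p \<longrightarrow> d p q = norm (snd q - snd p))
    \<and> (\<forall>p q. causal_le p q \<longleftrightarrow> d p q = fst q - fst p)
    \<and> (\<forall>p r. {q. d p q = r} = {q. max \<bar>fst q - fst p\<bar> (norm (snd q - snd p)) = r})"
proof -
  have d: "d p q = max \<bar>fst q - fst p\<bar> (norm (snd q - snd p))" for p q
    unfolding d_def by (rule null_dist_fst_eq)
  have causal: "q \<in> J_plus p \<union> J_minus p \<longleftrightarrow> norm (snd q - snd p) \<le> \<bar>fst q - fst p\<bar>" for p q :: "'n mpoint"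
    by (auto simp: J_plus_iff J_minus_iff)
  show ?thesis
  proof (intro conjI allI impI)
    fix p q r v :: "'n mpoint"
    show "d p q = 0 \<longleftrightarrow> p = q"
      unfolding d using norm_ge_zero[of "snd q - snd p"] by (auto simp: max_def prod_eq_iff)
    show "d p q = d q p"
      unfolding d by (simp add: norm_minus_commute abs_minus_commute)
    show "d p r \<le> d p q + d q r"
      unfolding d using norm_triangle_ineq[of "snd q - snd p" "snd r - snd q"] by simp linarith
    show "d (p + v) (q + v) = d p q"
      unfolding d by simp
    show "d p q = \<bar>fst q - fst p\<bar>" if "q \<in> J_plus p \<union> J_minus p"
      using that unfolding d causal by simp
    show "d p q = norm (snd q - snd p)" if "q \<notin> J_plus p \<union> J_minus p"
      using that unfolding d causal by simp
    show "causal_le p q \<longleftrightarrow> d p q = fst q - fst p"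
      unfolding d causal_le_def J_plus_iff using norm_ge_zero[of "snd q - snd p"] by (smt (verit))
    show "{q. d p q = c} = {q. max \<bar>fst q - fst p\<bar> (norm (snd q - snd p)) = c}" for c
      unfolding d ..
  qed
qed

end
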